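(* There is an absolute constant $c>0$ such that the following holds. Let $G$ be a finite abelian group, let $B$ be a regular Bohr set of rank $d$, let $A \subset B$ have relative density at least $\alpha>0$, and let $B', B''$ be nonempty subsets of $B_{c\alpha/d}$. Then either (1) there is an $x \in B$ such that $1_A*\mu_{B'}(x) \geq \tfrac{3}{4}\alpha$ and $1_A*\mu_{B''}(x) \geq \tfrac{3}{4}\alpha$, or (2) $\|1_A*\mu_{B'}\|_\infty \geq \tfrac{9}{8}\alpha$ or $\|1_A*\mu_{B''}\|_\infty \geq \tfrac{9}{8}\alpha$.
   Context: $f*g(x)=\sum_{y} f(y)g(x-y)$; $1_X$ indicator, $\mu_X=1_X/|X|$; $\|F\|_\infty=\max|F|$. Bohr sets: $\mathrm{Bohr}(\Gamma,\rho)=\{x: |\gamma(x)-1|\le\rho\ \forall\gamma\in\Gamma\}$ for $\Gamma\subset\widehat G$, $(\Gamma,\rho)$ part of the data, rank $|\Gamma|$; $B_\tau=\mathrm{Bohr}(\Gamma,\tau\rho)$. $B$ of rank $d$ is regular if $1-12d|\tau|\le |B_{1+\tau}|/|B|\le 1+12d|\tau|$ for $|\tau|\le 1/(12d)$. *)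

theory Defs
  imports "HOL-Analysis.Analysis" "HOL-Algebra.Algebra"
begin

text \<open>Finite abelian groups are HOL-Algebra structures with carrier in nat (every finite
abelian group is isomorphic to one of these), so that the absolute constant can be
quantified uniformly over all groups.\<close>

definition character :: "nat monoid \<Rightarrow> (nat \<Rightarrow> complex) \<Rightarrow> bool" where
  "character G \<gamma> \<longleftrightarrow>
     (\<forall>x\<in>carrier G. \<forall>y\<in>carrier G. \<gamma> (x \<otimes>\<^bsub>G\<^esub> y) = \<gamma> x * \<gamma> y)
   \<and> (\<forall>x\<in>carrier G. cmod (\<gamma> x) = 1)
   \<and> (\<forall>x. x \<notin> carrier G \<longrightarrow> \<gamma> x = 0)"

definition bohr :: "nat monoid \<Rightarrow> (nat \<Rightarrow> complex) set \<Rightarrow> real \<Rightarrow> nat set" where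
  "bohr G \<Gamma> \<rho> = {x\<in>carrier G. \<forall>\<gamma>\<in>\<Gamma>. cmod (\<gamma> x - 1) \<le> \<rho>}"

text \<open>Regularity of the Bohr set B = Bohr(Gamma, rho) of rank d = card Gamma,
  with B_t = Bohr(Gamma, t * rho).\<close>
definition regular_bohr :: "nat monoid \<Rightarrow> (nat \<Rightarrow> complex) set \<Rightarrow> real \<Rightarrow> bool" where
  "regular_bohr G \<Gamma> \<rho> \<longleftrightarrow>
     (\<forall>\<tau>::real. \<bar>\<tau>\<bar> \<le> 1 / (12 * real (card \<Gamma>)) \<longrightarrow>
        (1 - 12 * real (card \<Gamma>) * \<bar>\<tau>\<bar>) * real (card (bohr G \<Gamma> \<rho>))
          \<le> real (card (bohr G \<Gamma> ((1 + \<tau>) * \<rho>)))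
      \<and> real (card (bohr G \<Gamma> ((1 + \<tau>) * \<rho>)))
          \<le> (1 + 12 * real (card \<Gamma>) * \<bar>\<tau>\<bar>) * real (card (bohr G \<Gamma> \<rho>)))"

definition conv :: "nat monoid \<Rightarrow> (nat \<Rightarrow> real) \<Rightarrow> (nat \<Rightarrow> real) \<Rightarrow> nat \<Rightarrow> real" where
  "conv G f g x = (\<Sum>y\<in>carrier G. f y * g (mult G x (m_inv G y)))"

definition mu :: "nat set \<Rightarrow> nat \<Rightarrow> real" where
  "mu S x = indicator S x / real (card S)"

definition supnorm :: "nat monoid \<Rightarrow> (nat \<Rightarrow> real) \<Rightarrow> real" where
  "supnorm G F = Max ((\<lambda>x. \<bar>F x\<bar>) ` carrier G)"

end

theory Submission
  imports Defs
begin

text \<open>Take c = 1/200 and \<delta> = c\<alpha>/d. Every translate of B' by a point of the shrunken Bohr set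
  B_(1-\<delta>) lies in B, so the sum of 1_A*\<mu>_B' over B is at least |A \<inter> B_(1-\<delta>)|, while regularity
  gives |B - B_(1-\<delta>)| \<le> 12d\<delta>|B| = 12c\<alpha>|B|. Hence 1_A*\<mu>_B', and likewise 1_A*\<mu>_B'', has average
  at least (1 - 12c)\<alpha> on B. If both stay below 9\<alpha>/8 and at no point of B are both at least 3\<alpha>/4,
  their sum is below 15\<alpha>/8 < 2(1 - 12c)\<alpha> everywhere on B, a contradiction.\<close>

lemma bohr_mono: "s \<le> t \<Longrightarrow> bohr G \<Gamma> s \<subseteq> bohr G \<Gamma> t"
  unfolding bohr_def by force

lemma bohr_subset_carrier: "bohr G \<Gamma> s \<subseteq> carrier G"
  unfolding bohr_def by auto

lemma finite_bohr: "finite (carrier G) \<Longrightarrow> finite (bohr G \<Gamma> s)"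
  using finite_subset[OF bohr_subset_carrier] .

lemma character_one:
  fixes G :: "nat monoid" (structure)
  assumes "group G" "character G \<gamma>"
  shows "\<gamma> \<one>\<^bsub>G\<^esub> = 1"
proof -
  interpret group G by fact
  have "\<gamma> \<one> = \<gamma> \<one> * \<gamma> \<one>" and "cmod (\<gamma> \<one>) = 1"
    using assms(2) unfolding character_def by (metis one_closed l_one)+
  then show ?thesis by (metis mult_cancel_right1 norm_zero zero_neq_one)
qed

lemma one_in_bohr:
  assumes "group G" "\<forall>\<gamma>\<in>\<Gamma>. character G \<gamma>" "0 \<le> s"
  shows "\<one>\<^bsub>G\<^esub> \<in> bohr G \<Gamma> s"
proof -
  have "cmod (\<gamma> \<one>\<^bsub>G\<^esub> - 1) \<le> s" if "\<gamma> \<in> \<Gamma>" for \<gamma>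
  proof -
    have "\<gamma> \<one>\<^bsub>G\<^esub> = 1" using that assms(2) character_one[OF assms(1)] by blast
    then show ?thesis using assms(3) by simp
  qed
  then show ?thesis
    using group.is_monoid[OF assms(1)] unfolding bohr_def by (simp add: monoid.one_closed)
qed

lemma bohr_mult:
  fixes G :: "nat monoid" (structure)
  assumes "group G" "\<forall>\<gamma>\<in>\<Gamma>. character G \<gamma>" "b \<in> bohr G \<Gamma> s" "y \<in> bohr G \<Gamma> t"
  shows "b \<otimes>\<^bsub>G\<^esub> y \<in> bohr G \<Gamma> (s + t)"
  unfolding bohr_def
proof (intro CollectI conjI ballI)
  interpret group G by fact
  have b: "b \<in> carrier G" and y: "y \<in> carrier G" using assms(3,4) by (auto simp: bohr_def)
  then show "b \<otimes> y \<in> carrier G" by simp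
  fix \<gamma> assume "\<gamma> \<in> \<Gamma>"
  then have ch: "character G \<gamma>" and "cmod (\<gamma> b - 1) \<le> s" "cmod (\<gamma> y - 1) \<le> t"
    using assms(2-4) by (auto simp: bohr_def)
  have "\<gamma> (b \<otimes> y) - 1 = (\<gamma> b - 1) * \<gamma> y + (\<gamma> y - 1)"
    using ch b y unfolding character_def by (simp add: algebra_simps)
  then have "cmod (\<gamma> (b \<otimes> y) - 1) \<le> cmod (\<gamma> b - 1) * cmod (\<gamma> y) + cmod (\<gamma> y - 1)"
    by (metis norm_mult norm_triangle_ineq)
  also have "cmod (\<gamma> y) = 1" using ch y unfolding character_def by auto
  finally show "cmod (\<gamma> (b \<otimes> y) - 1) \<le> s + t"
    using \<open>cmod (\<gamma> b - 1) \<le> s\<close> \<open>cmod (\<gamma> y - 1) \<le> t\<close> by simp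
qed

lemma sum_mu_translate_ge_one:
  fixes G :: "nat monoid" (structure)
  assumes "group G" "finite S" "B \<subseteq> carrier G" "B \<noteq> {}" "finite B"
    and "y \<in> carrier G" "(\<lambda>b. b \<otimes>\<^bsub>G\<^esub> y) ` B \<subseteq> S"
  shows "1 \<le> (\<Sum>x\<in>S. mu B (x \<otimes>\<^bsub>G\<^esub> inv\<^bsub>G\<^esub> y))"
proof -
  interpret group G by fact
  have inj: "inj_on (\<lambda>b. b \<otimes> y) B"
    using assms(3,6) by (intro inj_onI) (metis right_cancel subsetD)
  have "1 = (\<Sum>b\<in>B. mu B (b \<otimes> y \<otimes> inv y))"
    using assms(3-6) by (simp add: mu_def m_assoc subsetD)
  also have "\<dots> = (\<Sum>x\<in>(\<lambda>b. b \<otimes> y) ` B. mu B (x \<otimes> inv y))"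
    by (simp add: sum.reindex[OF inj])
  also have "\<dots> \<le> (\<Sum>x\<in>S. mu B (x \<otimes> inv y))"
    using assms(2,7) by (intro sum_mono2) (auto simp: mu_def)
  finally show ?thesis .
qed

lemma sum_conv_indicator_ge_card:
  assumes "group G" "finite (carrier G)" "finite S" "B \<subseteq> carrier G" "B \<noteq> {}"
    and "A \<subseteq> carrier G" "Y \<subseteq> A" "\<And>y. y \<in> Y \<Longrightarrow> (\<lambda>b. b \<otimes>\<^bsub>G\<^esub> y) ` B \<subseteq> S"
  shows "real (card Y) \<le> (\<Sum>x\<in>S. conv G (indicator A) (mu B) x)"
proof -
  let ?m = "\<lambda>y. \<Sum>x\<in>S. mu B (x \<otimes>\<^bsub>G\<^esub> inv\<^bsub>G\<^esub> y)"
  have m_ge: "1 \<le> ?m y" if "y \<in> Y" for y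
    using sum_mu_translate_ge_one[OF assms(1,3-5)] that assms(2,4,6-8)
    by (meson finite_subset subsetD)
  have "real (card Y) \<le> (\<Sum>y\<in>Y. ?m y)"
    using sum_mono[of Y "\<lambda>_. 1" ?m] m_ge by simp
  also have "\<dots> \<le> (\<Sum>y\<in>A. ?m y)"
    using assms(2,6,7) by (intro sum_mono2) (auto intro!: sum_nonneg simp: mu_def finite_subset)
  also have "\<dots> = (\<Sum>y\<in>carrier G. indicator A y * ?m y)"
    using assms(2,6) by (simp add: indicator_def sum.If_cases Int_absorb1)
  also have "\<dots> = (\<Sum>x\<in>S. conv G (indicator A) (mu B) x)"
    unfolding conv_def sum_distrib_left by (rule sum.swap)
  finally show ?thesis .
qed

lemma sum_conv_indicator_bohr_ge:
  assumes "comm_group G" "finite (carrier G)" "\<forall>\<gamma>\<in>\<Gamma>. character G \<gamma>"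
    and "A \<subseteq> carrier G" "B \<noteq> {}" "B \<subseteq> bohr G \<Gamma> s" "s + t \<le> r"
  shows "real (card (A \<inter> bohr G \<Gamma> t)) \<le> (\<Sum>x\<in>bohr G \<Gamma> r. conv G (indicator A) (mu B) x)"
proof (rule sum_conv_indicator_ge_card)
  show "group G" using assms(1) by (simp add: comm_group.axioms(2))
  show "B \<subseteq> carrier G" using assms(6) bohr_subset_carrier by blast
  fix y assume "y \<in> A \<inter> bohr G \<Gamma> t"
  then show "(\<lambda>b. b \<otimes>\<^bsub>G\<^esub> y) ` B \<subseteq> bohr G \<Gamma> r"
    using bohr_mult[OF \<open>group G\<close> assms(3)] bohr_mono[OF assms(7)] assms(6) by blast
qed (use assms finite_bohr in auto)

lemma card_bohr_shrink_ge:
  assumes "regular_bohr G \<Gamma> \<rho>" "0 \<le> \<delta>" "\<delta> \<le> 1 / (12 * real (card \<Gamma>))"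
  shows "(1 - 12 * real (card \<Gamma>) * \<delta>) * real (card (bohr G \<Gamma> \<rho>))
           \<le> real (card (bohr G \<Gamma> ((1 - \<delta>) * \<rho>)))"
  using assms unfolding regular_bohr_def
  by (metis abs_minus_cancel abs_of_nonneg diff_conv_add_uminus)

lemma card_Int_ge:
  assumes "finite B" "A \<subseteq> B" "S \<subseteq> B"
  shows "real (card A) - (real (card B) - real (card S)) \<le> real (card (A \<inter> S))"
proof -
  have "card A = card (A \<inter> S) + card (A - S)"
    using assms by (metis card_Int_Diff finite_subset)
  moreover have "card (A - S) \<le> card (B - S)"
    using assms by (intro card_mono) auto
  moreover have "card (B - S) + card S = card B"
    using assms by (metis card_Diff_subset finite_subset le_add_diff_inverse2 card_mono)
  ultimately show ?thesis by linarith
qed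

text \<open>The bound \<alpha> \<le> 1, forced by A \<subseteq> B, keeps \<delta> = \<alpha>/(200d) in the range where regularity applies.\<close>

lemma sum_conv_indicator_regular_bohr_ge:
  assumes "comm_group G" "finite (carrier G)" "\<forall>\<gamma>\<in>\<Gamma>. character G \<gamma>"
    and "card \<Gamma> \<ge> 1" "\<rho> > 0" "regular_bohr G \<Gamma> \<rho>"
    and A: "A \<subseteq> bohr G \<Gamma> \<rho>" "\<alpha> > 0" "\<alpha> * real (card (bohr G \<Gamma> \<rho>)) \<le> real (card A)"
    and "B' \<noteq> {}" "B' \<subseteq> bohr G \<Gamma> ((1/200 * \<alpha> / real (card \<Gamma>)) * \<rho>)"
  shows "47/50 * \<alpha> * real (card (bohr G \<Gamma> \<rho>))
           \<le> (\<Sum>x\<in>bohr G \<Gamma> \<rho>. conv G (indicator A) (mu B') x)"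
proof -
  define B where "B = bohr G \<Gamma> \<rho>"
  define d where "d = real (card \<Gamma>)"
  define \<delta> where "\<delta> = \<alpha> / (200 * d)"
  define core where "core = bohr G \<Gamma> ((1 - \<delta>) * \<rho>)"
  have d: "d \<ge> 1" using assms(4) by (simp add: d_def)
  have "\<one>\<^bsub>G\<^esub> \<in> B"
    using one_in_bohr[OF comm_group.axioms(2)[OF assms(1)] assms(3)] assms(5) by (simp add: B_def)
  moreover have finB: "finite B" using assms(2) by (simp add: B_def finite_bohr)
  ultimately have "card B > 0" by (auto simp: card_gt_0_iff)
  moreover have "card A \<le> card B" using A finB by (simp add: B_def card_mono)
  moreover have "\<alpha> * real (card B) \<le> real (card B)"
    using A(3) \<open>card A \<le> card B\<close> by (simp add: B_def)
  ultimately have "\<alpha> \<le> 1" by simp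
  then have \<delta>_le: "\<delta> \<le> 1 / (12 * d)" using d A(2) by (simp add: \<delta>_def field_simps)
  have \<delta>_ge: "\<delta> \<ge> 0" using A(2) d by (simp add: \<delta>_def)
  have "(1 - 12 * d * \<delta>) * real (card B) \<le> real (card core)"
    using card_bohr_shrink_ge[OF assms(6) \<delta>_ge] \<delta>_le by (simp add: B_def d_def core_def)
  moreover have "12 * d * \<delta> = 12/200 * \<alpha>" using d by (simp add: \<delta>_def)
  ultimately have core_large: "(1 - 12/200 * \<alpha>) * real (card B) \<le> real (card core)"
    by simp
  have "core \<subseteq> B"
    using \<delta>_ge assms(5) by (simp add: core_def B_def bohr_mono)
  then have "real (card A) - (real (card B) - real (card core)) \<le> real (card (A \<inter> core))"
    using finB A(1) by (intro card_Int_ge) (auto simp: B_def)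
  also have "\<dots> \<le> (\<Sum>x\<in>B. conv G (indicator A) (mu B') x)"
    unfolding B_def core_def using assms(1-3,10,11) A(1) bohr_subset_carrier[of G \<Gamma> \<rho>]
    by (intro sum_conv_indicator_bohr_ge) (auto simp: \<delta>_def d_def algebra_simps)
  finally show ?thesis
    using core_large A(3) by (simp add: B_def algebra_simps)
qed

lemma le_supnorm: "finite (carrier G) \<Longrightarrow> x \<in> carrier G \<Longrightarrow> F x \<le> supnorm G F"
  unfolding supnorm_def by (meson Max_ge abs_ge_self finite_imageI image_eqI order_trans)

lemma large_averages_overlap:
  fixes f g :: "'a \<Rightarrow> real"
  assumes "finite B" "B \<noteq> {}" "0 < \<alpha>"
    and "47/50 * \<alpha> * real (card B) \<le> (\<Sum>x\<in>B. f x)" "47/50 * \<alpha> * real (card B) \<le> (\<Sum>x\<in>B. g x)"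
    and "\<forall>x\<in>B. f x < 9/8 * \<alpha> \<and> g x < 9/8 * \<alpha>"
  shows "\<exists>x\<in>B. 3/4 * \<alpha> \<le> f x \<and> 3/4 * \<alpha> \<le> g x"
proof (rule ccontr)
  assume "\<not> ?thesis"
  then have "\<forall>x\<in>B. f x + g x < 15/8 * \<alpha>" using assms(6) by force
  then have "(\<Sum>x\<in>B. f x + g x) < (\<Sum>x\<in>B. 15/8 * \<alpha>)"
    using assms(1,2) by (intro sum_strict_mono) auto
  moreover have "0 \<le> \<alpha> * real (card B)" using assms(3) by simp
  ultimately show False using assms(4,5) by (simp add: sum.distrib algebra_simps)
qed

theorem lemma12:
  shows "\<exists>c>0. \<forall>(G::nat monoid) \<Gamma> \<rho> A B' B'' \<alpha>.
     comm_group G \<and> finite (carrier G)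
   \<and> (\<forall>\<gamma>\<in>\<Gamma>. character G \<gamma>) \<and> finite \<Gamma> \<and> card \<Gamma> \<ge> 1 \<and> \<rho> > 0
   \<and> regular_bohr G \<Gamma> \<rho>
   \<and> A \<subseteq> bohr G \<Gamma> \<rho> \<and> \<alpha> > 0 \<and> real (card A) \<ge> \<alpha> * real (card (bohr G \<Gamma> \<rho>))
   \<and> B' \<noteq> {} \<and> B' \<subseteq> bohr G \<Gamma> ((c * \<alpha> / real (card \<Gamma>)) * \<rho>)
   \<and> B'' \<noteq> {} \<and> B'' \<subseteq> bohr G \<Gamma> ((c * \<alpha> / real (card \<Gamma>)) * \<rho>)
   \<longrightarrow> (\<exists>x\<in>bohr G \<Gamma> \<rho>. conv G (indicator A) (mu B') x \<ge> 3/4 * \<alpha>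
                          \<and> conv G (indicator A) (mu B'') x \<ge> 3/4 * \<alpha>)
     \<or> supnorm G (conv G (indicator A) (mu B')) \<ge> 9/8 * \<alpha>
     \<or> supnorm G (conv G (indicator A) (mu B'')) \<ge> 9/8 * \<alpha>"
proof (intro exI[of _ "1/200"] conjI allI impI)
  fix G :: "nat monoid" and \<Gamma> \<rho> A B' B'' and \<alpha> :: real
  assume H: "comm_group G \<and> finite (carrier G)
   \<and> (\<forall>\<gamma>\<in>\<Gamma>. character G \<gamma>) \<and> finite \<Gamma> \<and> card \<Gamma> \<ge> 1 \<and> \<rho> > 0
   \<and> regular_bohr G \<Gamma> \<rho>
   \<and> A \<subseteq> bohr G \<Gamma> \<rho> \<and> \<alpha> > 0 \<and> real (card A) \<ge> \<alpha> * real (card (bohr G \<Gamma> \<rho>))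
   \<and> B' \<noteq> {} \<and> B' \<subseteq> bohr G \<Gamma> ((1/200 * \<alpha> / real (card \<Gamma>)) * \<rho>)
   \<and> B'' \<noteq> {} \<and> B'' \<subseteq> bohr G \<Gamma> ((1/200 * \<alpha> / real (card \<Gamma>)) * \<rho>)"
  let ?B = "bohr G \<Gamma> \<rho>" and ?f = "conv G (indicator A) (mu B')" and ?g = "conv G (indicator A) (mu B'')"
  have "\<one>\<^bsub>G\<^esub> \<in> ?B" using H one_in_bohr[OF comm_group.axioms(2)] by auto
  then have "?B \<noteq> {}" by blast
  moreover have "47/50 * \<alpha> * real (card ?B) \<le> (\<Sum>x\<in>?B. ?f x)"
    and "47/50 * \<alpha> * real (card ?B) \<le> (\<Sum>x\<in>?B. ?g x)"
    using H by (intro sum_conv_indicator_regular_bohr_ge; simp)+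
  moreover have "?f x \<le> supnorm G ?f" "?g x \<le> supnorm G ?g" if "x \<in> ?B" for x
    using H that bohr_subset_carrier by (auto intro!: le_supnorm)
  ultimately show "(\<exists>x\<in>?B. ?f x \<ge> 3/4 * \<alpha> \<and> ?g x \<ge> 3/4 * \<alpha>)
     \<or> supnorm G ?f \<ge> 9/8 * \<alpha> \<or> supnorm G ?g \<ge> 9/8 * \<alpha>"
    using large_averages_overlap[of ?B \<alpha> ?f ?g] H finite_bohr by force
qed simp

end
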